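(* Let $\Gamma$ be a semigroup of $C^1$ diffeomorphisms of a compact manifold $M$. The action of $\Gamma$ on $M$ is expanding if and only if there exist $h_1,\dots,h_k\in\Gamma$, open balls $B_1,\dots,B_k$ in $M$ and a constant $\kappa>1$ such that $M=B_1\cup\dots\cup B_k$ and $m(Dh_i^{-1}(x))>\kappa$ for all $x\in B_i$ and all $i=1,\dots,k$.
   Context: For a linear map $T$, $m(T)=\|T^{-1}\|^{-1}$. The action of $\Gamma$ is expanding if for every $z\in M$ there is $g\in\Gamma$ with $m(Dg^{-1}(z))>1$. *)

theory Defs
  imports "HOL-Analysis.Analysis"
begin

text \<open>Compact manifolds are modelled as compact embedded C1 submanifolds of a
Euclidean space (Whitney embedding), with the Riemannian metric induced by the
ambient inner product.\<close>

definition C1_on :: "'a::euclidean_space set \<Rightarrow> ('a \<Rightarrow> 'b::euclidean_space) \<Rightarrow> bool" where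
  "C1_on U f \<longleftrightarrow> (\<exists>f' :: 'a \<Rightarrow> ('a \<Rightarrow>\<^sub>L 'b).
      (\<forall>x\<in>U. (f has_derivative blinfun_apply (f' x)) (at x)) \<and> continuous_on U f')"

definition C1_submanifold :: "nat \<Rightarrow> 'a::euclidean_space set \<Rightarrow> bool" where
  "C1_submanifold d M \<longleftrightarrow> (\<exists>S. subspace S \<and> dim S = d \<and>
     (\<forall>x\<in>M. \<exists>U V (\<phi>::'a\<Rightarrow>'a) \<psi>. open U \<and> x \<in> U \<and> open V \<and> \<phi> ` U = V \<and>
        (\<forall>y\<in>U. \<psi> (\<phi> y) = y) \<and> (\<forall>z\<in>V. \<phi> (\<psi> z) = z) \<and>
        C1_on U \<phi> \<and> C1_on V \<psi> \<and> \<phi> ` (M \<inter> U) = V \<inter> S))"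

definition C1_map :: "'a::euclidean_space set \<Rightarrow> ('a \<Rightarrow> 'a) \<Rightarrow> bool" where
  "C1_map M g \<longleftrightarrow> g ` M \<subseteq> M \<and>
     (\<forall>x\<in>M. \<exists>U G. open U \<and> x \<in> U \<and> C1_on U G \<and> (\<forall>y\<in>M \<inter> U. G y = g y))"

definition C1_diffeo :: "'a::euclidean_space set \<Rightarrow> ('a \<Rightarrow> 'a) \<Rightarrow> bool" where
  "C1_diffeo M g \<longleftrightarrow> bij_betw g M M \<and> C1_map M g \<and> C1_map M (inv_into M g)"

text \<open>C1 curves in M through x; their velocities at 0 are the tangent vectors at x.\<close>
definition curve_through :: "'a::euclidean_space set \<Rightarrow> 'a \<Rightarrow> (real \<Rightarrow> 'a) \<Rightarrow> bool" where
  "curve_through M x \<gamma> \<longleftrightarrow> \<gamma> C1_differentiable_on UNIV \<and> range \<gamma> \<subseteq> M \<and> \<gamma> 0 = x"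

text \<open>m(Dg(x)) = inf over unit tangent vectors v at x of |Dg(x) v|
 (equal to the norm of the inverse to the power -1 for an invertible map),
 where Dg(x) v is the velocity of g o gamma at 0.\<close>
definition conorm :: "'a::euclidean_space set \<Rightarrow> ('a \<Rightarrow> 'a) \<Rightarrow> 'a \<Rightarrow> real" where
  "conorm M g x = Inf {norm (vector_derivative (g \<circ> \<gamma>) (at 0)) | \<gamma>.
      curve_through M x \<gamma> \<and> norm (vector_derivative \<gamma> (at 0)) = 1}"

definition semigroup_of_C1_diffeos :: "'a::euclidean_space set \<Rightarrow> ('a \<Rightarrow> 'a) set \<Rightarrow> bool" where
  "semigroup_of_C1_diffeos M \<Gamma> \<longleftrightarrow> (\<forall>g\<in>\<Gamma>. C1_diffeo M g) \<and> (\<forall>g\<in>\<Gamma>. \<forall>h\<in>\<Gamma>. g \<circ> h \<in> \<Gamma>)"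

definition expanding :: "'a::euclidean_space set \<Rightarrow> ('a \<Rightarrow> 'a) set \<Rightarrow> bool" where
  "expanding M \<Gamma> \<longleftrightarrow> (\<forall>z\<in>M. \<exists>g\<in>\<Gamma>. conorm M (inv_into M g) z > 1)"

end

theory Submission
  imports Defs
begin

text \<open>Only the forward direction has content. The co-norm x \<mapsto> m(Dg(x)) of a C1 map g is lower
  semicontinuous on a C1 submanifold: along a sequence x_n \<rightarrow> z, unit tangent vectors at x_n
  subconverge to a unit tangent vector at z (in a chart, being tangent means being mapped into a fixed
  subspace by the continuous chart derivative, a closed condition), and Dg is continuous. Hence an
  inequality m(Dg^-1(z)) > 1 persists, with some margin kappa_z > 1, on a ball around z; compactness
  extracts finitely many balls, and kappa is the least of their margins.\<close>

lemma has_vector_derivative_in_subspace: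
  fixes f :: "real \<Rightarrow> 'a::euclidean_space"
  assumes f': "(f has_vector_derivative f') (at t)" and S: "subspace S"
    and ev: "eventually (\<lambda>s. f s \<in> S) (nhds t)"
  shows "f' \<in> S"
proof -
  have "((\<lambda>s. ((f s - f t) - (s - t) *\<^sub>R f') /\<^sub>R norm (s - t)) \<longlongrightarrow> 0) (at t)"
    using f' by (simp add: has_vector_derivative_def has_derivative_at_within)
  then have "((\<lambda>s. norm (((f s - f t) - (s - t) *\<^sub>R f') /\<^sub>R norm (s - t))) \<longlongrightarrow> 0) (at t)"
    by (rule tendsto_norm_zero)
  moreover have "eventually (\<lambda>s. norm (((f s - f t) - (s - t) *\<^sub>R f') /\<^sub>R norm (s - t))
      = norm ((f s - f t) /\<^sub>R (s - t) - f')) (at t)"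
    unfolding eventually_at_filter
  proof (rule always_eventually, intro allI impI)
    fix s :: real assume "s \<noteq> t"
    then have "(f s - f t) /\<^sub>R (s - t) - f' = inverse (s - t) *\<^sub>R ((f s - f t) - (s - t) *\<^sub>R f')"
      by (simp add: scaleR_diff_right)
    then show "norm (((f s - f t) - (s - t) *\<^sub>R f') /\<^sub>R norm (s - t))
      = norm ((f s - f t) /\<^sub>R (s - t) - f')"
      by simp
  qed
  ultimately have "((\<lambda>s. norm ((f s - f t) /\<^sub>R (s - t) - f')) \<longlongrightarrow> 0) (at t)"
    by (rule Lim_transform_eventually)
  then have quotient: "((\<lambda>s. (f s - f t) /\<^sub>R (s - t)) \<longlongrightarrow> f') (at t)"
    by (simp add: tendsto_norm_zero_iff LIM_zero_iff)
  have ft: "f t \<in> S"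
    using ev by (rule eventually_nhds_x_imp_x)
  from ev have "eventually (\<lambda>s. (f s - f t) /\<^sub>R (s - t) \<in> S) (at t)"
    unfolding eventually_at_filter by eventually_elim (simp add: S ft subspace_diff subspace_scale)
  then show ?thesis
    using Lim_in_closed_set[OF closed_subspace[OF S] _ _ quotient] by simp
qed

lemma has_derivative_left_inverse_apply:
  assumes "open U" "y \<in> U" "\<forall>x\<in>U. \<psi> (\<phi> x) = x"
    and "(\<phi> has_derivative \<phi>') (at y)" "(\<psi> has_derivative \<psi>') (at (\<phi> y))"
  shows "\<psi>' (\<phi>' v) = v"
proof -
  have "(\<psi> \<circ> \<phi> has_derivative \<psi>' \<circ> \<phi>') (at y)"
    using assms(4,5) by (rule diff_chain_at)
  moreover have "(\<psi> \<circ> \<phi> has_derivative id) (at y)"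
    by (rule has_derivative_transform_within_open[OF has_derivative_id assms(1,2)])
       (use assms(3) in auto)
  ultimately have "\<psi>' \<circ> \<phi>' = id"
    by (rule has_derivative_unique)
  then show ?thesis
    by (metis comp_apply id_apply)
qed

text \<open>A sine-parametrised segment through a in direction w: unlike the line t \<mapsto> a + t w it stays in
  the ball for all real t, as the curves of \<open>curve_through\<close> must.\<close>

lemma bounded_C1_curve_along:
  fixes a w :: "'a::real_normed_vector"
  assumes "e > 0"
  obtains p p' where "\<And>t. (p has_vector_derivative p' t) (at t)" "continuous_on UNIV p'"
    "p 0 = a" "p' 0 = w" "\<And>t. p t \<in> ball a e" "\<And>t. \<exists>s. p t = a + s *\<^sub>R w"
proof
  define \<epsilon> where "\<epsilon> = e / (norm w + 1)"
  have "norm w + 1 > 0"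
    by (simp add: add_nonneg_pos)
  then have \<epsilon>: "\<epsilon> > 0" "\<epsilon> * norm w < e"
    using assms by (auto simp: \<epsilon>_def field_simps)
  show "((\<lambda>t. a + (\<epsilon> * sin (t / \<epsilon>)) *\<^sub>R w) has_vector_derivative cos (t / \<epsilon>) *\<^sub>R w) (at t)" for t
    using \<epsilon>(1) by (auto intro!: derivative_eq_intros simp: has_vector_derivative_def algebra_simps)
  show "continuous_on UNIV (\<lambda>t. cos (t / \<epsilon>) *\<^sub>R w)"
    using \<epsilon>(1) by (intro continuous_intros) auto
  show "a + (\<epsilon> * sin (t / \<epsilon>)) *\<^sub>R w \<in> ball a e" for t
  proof -
    have "dist a (a + (\<epsilon> * sin (t / \<epsilon>)) *\<^sub>R w) = \<epsilon> * (\<bar>sin (t / \<epsilon>)\<bar> * norm w)"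
      using \<epsilon>(1) by (simp add: dist_norm abs_mult)
    also have "\<dots> \<le> \<epsilon> * norm w"
      using \<epsilon>(1) by (simp add: mult_left_le_one_le abs_sin_le_one)
    also have "\<dots> < e"
      by (rule \<epsilon>(2))
    finally show ?thesis
      by simp
  qed
  show "\<exists>s. a + (\<epsilon> * sin (t / \<epsilon>)) *\<^sub>R w = a + s *\<^sub>R w" for t
    by blast
qed simp_all

lemma C1_differentiable_on_compose_curve:
  fixes \<psi> :: "'a::real_normed_vector \<Rightarrow> 'b::real_normed_vector"
  assumes p: "\<And>t. (p has_vector_derivative p' t) (at t)" "continuous_on UNIV p'" "range p \<subseteq> V"
    and \<psi>': "\<forall>z\<in>V. (\<psi> has_derivative blinfun_apply (\<psi>' z)) (at z)" "continuous_on V \<psi>'"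
  shows "(\<psi> \<circ> p) C1_differentiable_on UNIV"
    and "vector_derivative (\<psi> \<circ> p) (at t) = \<psi>' (p t) (p' t)"
proof -
  have velocity: "((\<psi> \<circ> p) has_vector_derivative \<psi>' (p t) (p' t)) (at t)" for t
  proof -
    have "(\<psi> has_derivative blinfun_apply (\<psi>' (p t))) (at (p t) within range p)"
      using \<psi>'(1) p(3) by (blast intro: has_derivative_at_withinI)
    then show ?thesis
      by (rule vector_derivative_diff_chain_within[OF p(1)])
  qed
  have "continuous_on UNIV p"
    using p(1) by (blast intro: continuous_at_imp_continuous_on has_vector_derivative_continuous)
  then have "continuous_on UNIV (\<lambda>t. \<psi>' (p t))"
    by (rule continuous_on_compose2[OF \<psi>'(2) _ p(3)])
  then have "continuous_on UNIV (\<lambda>t. \<psi>' (p t) (p' t))"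
    using p(2) by (intro continuous_intros)
  then show "(\<psi> \<circ> p) C1_differentiable_on UNIV"
    unfolding C1_differentiable_on_def using velocity by (intro exI[of _ "\<lambda>t. \<psi>' (p t) (p' t)"]) auto
  show "vector_derivative (\<psi> \<circ> p) (at t) = \<psi>' (p t) (p' t)"
    by (rule vector_derivative_at[OF velocity])
qed

lemma C1_submanifold_chartE:
  fixes M :: "'a::euclidean_space set"
  assumes "C1_submanifold d M" "x \<in> M"
  obtains S U V \<phi> \<psi> \<phi>' \<psi>' where "subspace S" "dim S = d"
    "open U" "x \<in> U" "open V" "(\<phi> :: 'a \<Rightarrow> 'a) ` U = V" "\<forall>y\<in>U. \<psi> (\<phi> y) = y" "\<forall>z\<in>V. \<phi> (\<psi> z) = z"
    "\<forall>y\<in>U. (\<phi> has_derivative blinfun_apply (\<phi>' y)) (at y)" "continuous_on U \<phi>'"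
    "\<forall>z\<in>V. (\<psi> has_derivative blinfun_apply (\<psi>' z)) (at z)" "continuous_on V \<psi>'"
    "\<phi> ` (M \<inter> U) = V \<inter> S"
proof -
  obtain S where S: "subspace S" "dim S = d" and charts: "\<forall>x\<in>M. \<exists>U V (\<phi>::'a\<Rightarrow>'a) \<psi>.
      open U \<and> x \<in> U \<and> open V \<and> \<phi> ` U = V \<and> (\<forall>y\<in>U. \<psi> (\<phi> y) = y) \<and> (\<forall>z\<in>V. \<phi> (\<psi> z) = z) \<and>
      C1_on U \<phi> \<and> C1_on V \<psi> \<and> \<phi> ` (M \<inter> U) = V \<inter> S"
    using assms(1) unfolding C1_submanifold_def by blast
  then obtain U V \<phi> \<psi> where chart: "open U" "x \<in> U" "open V" "\<phi> ` U = V"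
      "\<forall>y\<in>U. \<psi> (\<phi> y) = y" "\<forall>z\<in>V. \<phi> (\<psi> z) = z" "\<phi> ` (M \<inter> U) = V \<inter> S"
    and "C1_on U \<phi>" "C1_on V \<psi>"
    using bspec[OF charts assms(2)] by (elim exE conjE) blast
  from \<open>C1_on U \<phi>\<close> obtain \<phi>' where \<phi>':
    "\<forall>y\<in>U. (\<phi> has_derivative blinfun_apply (\<phi>' y)) (at y)" "continuous_on U \<phi>'"
    unfolding C1_on_def by blast
  from \<open>C1_on V \<psi>\<close> obtain \<psi>' where \<psi>':
    "\<forall>z\<in>V. (\<psi> has_derivative blinfun_apply (\<psi>' z)) (at z)" "continuous_on V \<psi>'"
    unfolding C1_on_def by blast
  show ?thesis
    by (rule that[OF S chart(1-6) \<phi>' \<psi>' chart(7)])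
qed

lemma C1_mapE:
  assumes "C1_map M g" "x \<in> M"
  obtains W G G' where "open W" "x \<in> W"
    "\<forall>y\<in>W. (G has_derivative blinfun_apply (G' y)) (at y)" "continuous_on W G'"
    "\<forall>y\<in>M \<inter> W. G y = g y"
proof -
  obtain W G where W: "open W" "x \<in> W" and "C1_on W G" and G: "\<forall>y\<in>M \<inter> W. G y = g y"
    using assms unfolding C1_map_def by blast
  then obtain G' where "\<forall>y\<in>W. (G has_derivative blinfun_apply (G' y)) (at y)" "continuous_on W G'"
    unfolding C1_on_def by blast
  then show ?thesis
    by (rule that[OF W _ _ G])
qed

lemma curve_through_has_vector_derivative:
  assumes "curve_through M x \<gamma>"
  shows "(\<gamma> has_vector_derivative vector_derivative \<gamma> (at t)) (at t)"
  using assms unfolding curve_through_def C1_differentiable_on_def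
  by (metis vector_derivative_at UNIV_I)

lemma curve_through_eventually_in:
  assumes "curve_through M x \<gamma>" "open W" "x \<in> W"
  shows "eventually (\<lambda>s. \<gamma> s \<in> M \<inter> W) (nhds 0)"
proof -
  have "continuous_on UNIV \<gamma>"
    using assms(1) unfolding curve_through_def by (blast intro: C1_differentiable_imp_continuous_on)
  then have "open (\<gamma> -` W)"
    by (rule open_vimage[OF assms(2)])
  then have "eventually (\<lambda>s. s \<in> \<gamma> -` W) (nhds 0)"
    using assms(1,3) by (intro eventually_nhds_in_open) (auto simp: curve_through_def)
  then show ?thesis
    by eventually_elim (use assms(1) in \<open>auto simp: curve_through_def\<close>)
qed

lemma has_vector_derivative_comp_curve_through:
  assumes "curve_through M x \<gamma>" "(G has_derivative G') (at x)"
  shows "((G \<circ> \<gamma>) has_vector_derivative G' (vector_derivative \<gamma> (at 0))) (at 0)"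
proof -
  have "\<gamma> 0 = x"
    using assms(1) by (simp add: curve_through_def)
  then have "(G has_derivative G') (at (\<gamma> 0) within range \<gamma>)"
    using assms(2) by (simp add: has_derivative_at_withinI)
  then show ?thesis
    by (rule vector_derivative_diff_chain_within[OF curve_through_has_vector_derivative[OF assms(1)]])
qed

lemma vector_derivative_comp_curve_through:
  assumes "curve_through M x \<gamma>" "open W" "x \<in> W"
    and "(G has_derivative G') (at x)" "\<forall>y\<in>M \<inter> W. G y = g y"
  shows "vector_derivative (g \<circ> \<gamma>) (at 0) = G' (vector_derivative \<gamma> (at 0))"
proof -
  have ev: "eventually (\<lambda>s. s \<in> UNIV \<longrightarrow> (G \<circ> \<gamma>) s = (g \<circ> \<gamma>) s) (nhds 0)"
    using curve_through_eventually_in[OF assms(1-3)] by eventually_elim (use assms(5) in auto)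
  have "((G \<circ> \<gamma>) has_vector_derivative G' (vector_derivative \<gamma> (at 0))) (at 0)"
    using assms(1,4) by (rule has_vector_derivative_comp_curve_through)
  then have "((g \<circ> \<gamma>) has_vector_derivative G' (vector_derivative \<gamma> (at 0))) (at 0)"
    using has_vector_derivative_cong_ev[OF ev] eventually_nhds_x_imp_x[OF ev] by (simp add: comp_def)
  then show ?thesis
    by (rule vector_derivative_at)
qed

lemma chart_derivative_velocity_in_subspace:
  fixes \<phi> :: "'a::euclidean_space \<Rightarrow> 'b::euclidean_space"
  assumes "curve_through M x \<gamma>" "open U" "x \<in> U"
    and "(\<phi> has_derivative \<phi>') (at x)" "\<phi> ` (M \<inter> U) \<subseteq> S" "subspace S"
  shows "\<phi>' (vector_derivative \<gamma> (at 0)) \<in> S"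
proof (rule has_vector_derivative_in_subspace[where f = "\<phi> \<circ> \<gamma>"])
  show "((\<phi> \<circ> \<gamma>) has_vector_derivative \<phi>' (vector_derivative \<gamma> (at 0))) (at 0)"
    using assms(1,4) by (rule has_vector_derivative_comp_curve_through)
  show "eventually (\<lambda>s. (\<phi> \<circ> \<gamma>) s \<in> S) (nhds 0)"
    using curve_through_eventually_in[OF assms(1-3)] by eventually_elim (use assms(5) in auto)
qed (rule assms(6))

lemma curve_through_chart_inverse:
  fixes \<psi> :: "'a::euclidean_space \<Rightarrow> 'a"
  assumes "open V" "\<phi> ` U = V" "\<forall>y\<in>U. \<psi> (\<phi> y) = y"
    and \<psi>': "\<forall>z\<in>V. (\<psi> has_derivative blinfun_apply (\<psi>' z)) (at z)" "continuous_on V \<psi>'"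
    and MU: "\<phi> ` (M \<inter> U) = V \<inter> S" and "subspace S" "x \<in> M" "x \<in> U" "w \<in> S"
  obtains \<gamma> where "curve_through M x \<gamma>" "vector_derivative \<gamma> (at 0) = \<psi>' (\<phi> x) w"
proof -
  have "\<phi> x \<in> V \<inter> S"
    using MU assms(8,9) by blast
  then obtain e where "e > 0" "ball (\<phi> x) e \<subseteq> V"
    using \<open>open V\<close> open_contains_ball by blast
  obtain p p' where p: "\<And>t. (p has_vector_derivative p' t) (at t)" "continuous_on UNIV p'"
      "p 0 = \<phi> x" "p' 0 = w" "\<And>t. p t \<in> ball (\<phi> x) e" "\<And>t. \<exists>s. p t = \<phi> x + s *\<^sub>R w"
    using bounded_C1_curve_along[OF \<open>e > 0\<close>] by metis
  have pVS: "p t \<in> V \<inter> S" for t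
    using p(5,6)[of t] \<open>ball (\<phi> x) e \<subseteq> V\<close> \<open>\<phi> x \<in> V \<inter> S\<close> \<open>subspace S\<close> \<open>w \<in> S\<close>
    by (auto simp: subspace_add subspace_scale)
  have "range p \<subseteq> V"
    using pVS by blast
  have range: "range (\<psi> \<circ> p) \<subseteq> M"
  proof clarsimp
    fix t
    obtain u where "u \<in> M \<inter> U" "p t = \<phi> u"
      using pVS[of t] MU by (metis imageE)
    then show "\<psi> (p t) \<in> M"
      using assms(3) by auto
  qed
  note C1 = C1_differentiable_on_compose_curve[OF p(1,2) \<open>range p \<subseteq> V\<close> \<psi>']
  have "(\<psi> \<circ> p) 0 = x"
    using assms(3,9) p(3) by simp
  then have "curve_through M x (\<psi> \<circ> p)"
    using range C1(1) by (simp add: curve_through_def)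
  moreover have "vector_derivative (\<psi> \<circ> p) (at 0) = \<psi>' (\<phi> x) w"
    using C1(2)[of 0] p(3,4) by simp
  ultimately show ?thesis
    by (rule that)
qed

lemma curve_through_unit_velocity_exists:
  assumes "C1_submanifold d M" "d \<ge> 1" "x \<in> M"
  obtains \<gamma> where "curve_through M x \<gamma>" "norm (vector_derivative \<gamma> (at 0)) = 1"
proof -
  obtain S U V \<phi> \<psi> \<phi>' \<psi>' where S: "subspace S" "dim S = d"
    and chart: "open U" "x \<in> U" "open V" "(\<phi> :: 'a \<Rightarrow> 'a) ` U = V" "\<forall>y\<in>U. \<psi> (\<phi> y) = y" "\<forall>z\<in>V. \<phi> (\<psi> z) = z"
      "\<forall>y\<in>U. (\<phi> has_derivative blinfun_apply (\<phi>' y)) (at y)" "continuous_on U \<phi>'"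
      "\<forall>z\<in>V. (\<psi> has_derivative blinfun_apply (\<psi>' z)) (at z)" "continuous_on V \<psi>'"
      "\<phi> ` (M \<inter> U) = V \<inter> S"
    by (rule C1_submanifold_chartE[OF assms(1,3)])
  have "\<not> S \<subseteq> {0}"
    using S(2) assms(2) dim_eq_0[of S] by auto
  then obtain w where w: "w \<in> S" "w \<noteq> 0"
    by blast
  define u where "u = \<psi>' (\<phi> x) w"
  have "\<phi> x \<in> V" "\<psi> (\<phi> x) = x"
    using chart by auto
  then have "\<phi>' x u = w"
    unfolding u_def
    by (intro has_derivative_left_inverse_apply[of V "\<phi> x" \<phi> \<psi>]) (use chart in auto)
  then have "u \<noteq> 0"
    using w(2) by auto
  have "w /\<^sub>R norm u \<in> S"
    using w(1) S(1) by (simp add: subspace_scale)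
  then obtain \<gamma> where "curve_through M x \<gamma>" "vector_derivative \<gamma> (at 0) = \<psi>' (\<phi> x) (w /\<^sub>R norm u)"
    by (rule curve_through_chart_inverse[OF chart(3,4,5,9,10,11) S(1) assms(3) chart(2)])
  moreover have "\<psi>' (\<phi> x) (w /\<^sub>R norm u) = u /\<^sub>R norm u"
    by (simp add: u_def blinfun.scaleR_right)
  ultimately show ?thesis
    using that \<open>u \<noteq> 0\<close> by simp
qed

lemma conorm_le_velocity:
  assumes "curve_through M x \<gamma>" "norm (vector_derivative \<gamma> (at 0)) = 1"
  shows "conorm M g x \<le> norm (vector_derivative (g \<circ> \<gamma>) (at 0))"
  unfolding conorm_def by (rule cInf_lower) (use assms in \<open>auto intro: bdd_belowI[of _ 0]\<close>)

text \<open>This is where d \<ge> 1 is needed: without unit tangent vectors, \<open>conorm\<close> is the junk value Inf {}.\<close>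

lemma conorm_lessE:
  assumes "C1_submanifold d M" "d \<ge> 1" "x \<in> M" "conorm M g x < c"
  obtains \<gamma> where "curve_through M x \<gamma>" "norm (vector_derivative \<gamma> (at 0)) = 1"
    "norm (vector_derivative (g \<circ> \<gamma>) (at 0)) < c"
proof -
  obtain \<gamma> where "curve_through M x \<gamma>" "norm (vector_derivative \<gamma> (at 0)) = 1"
    by (rule curve_through_unit_velocity_exists[OF assms(1-3)])
  then have "{norm (vector_derivative (g \<circ> \<gamma>) (at 0)) | \<gamma>.
      curve_through M x \<gamma> \<and> norm (vector_derivative \<gamma> (at 0)) = 1} \<noteq> {}"
    by blast
  from cInf_lessD[OF this assms(4)[unfolded conorm_def]] show ?thesis
    using that by blast
qed

lemma curve_through_velocity_limit:
  assumes "C1_submanifold d M" "z \<in> M" and curves: "\<And>n. curve_through M (x n) (\<gamma> n)"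
    and "x \<longlonglongrightarrow> z" "(\<lambda>n. vector_derivative (\<gamma> n) (at 0)) \<longlonglongrightarrow> l"
  obtains \<gamma>0 where "curve_through M z \<gamma>0" "vector_derivative \<gamma>0 (at 0) = l"
proof -
  obtain S U V \<phi> \<psi> \<phi>' \<psi>' where S: "subspace S" "dim S = d"
    and chart: "open U" "z \<in> U" "open V" "(\<phi> :: 'a \<Rightarrow> 'a) ` U = V" "\<forall>y\<in>U. \<psi> (\<phi> y) = y" "\<forall>z\<in>V. \<phi> (\<psi> z) = z"
      "\<forall>y\<in>U. (\<phi> has_derivative blinfun_apply (\<phi>' y)) (at y)" "continuous_on U \<phi>'"
      "\<forall>z\<in>V. (\<psi> has_derivative blinfun_apply (\<psi>' z)) (at z)" "continuous_on V \<psi>'"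
      "\<phi> ` (M \<inter> U) = V \<inter> S"
    by (rule C1_submanifold_chartE[OF assms(1,2)])
  have in_U: "eventually (\<lambda>n. x n \<in> U) sequentially"
    using topological_tendstoD[OF assms(4) chart(1,2)] .
  then have in_S: "eventually (\<lambda>n. \<phi>' (x n) (vector_derivative (\<gamma> n) (at 0)) \<in> S) sequentially"
    by eventually_elim
       (rule chart_derivative_velocity_in_subspace[OF curves chart(1)], use chart S in auto)
  have "(\<lambda>n. \<phi>' (x n) (vector_derivative (\<gamma> n) (at 0))) \<longlonglongrightarrow> \<phi>' z l"
    using blinfun.tendsto[OF continuous_on_tendsto_compose[OF chart(8) assms(4) chart(2) in_U] assms(5)] .
  then have "\<phi>' z l \<in> S"
    by (rule Lim_in_closed_set[OF closed_subspace[OF S(1)] in_S trivial_limit_sequentially])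
  then obtain \<gamma>0 where "curve_through M z \<gamma>0" "vector_derivative \<gamma>0 (at 0) = \<psi>' (\<phi> z) (\<phi>' z l)"
    by (rule curve_through_chart_inverse[OF chart(3,4,5,9,10,11) S(1) assms(2) chart(2)])
  moreover have "\<psi>' (\<phi> z) (\<phi>' z l) = l"
    by (rule has_derivative_left_inverse_apply[of U z \<psi> \<phi>]) (use chart in auto)
  ultimately show ?thesis
    using that by simp
qed

lemma vector_derivative_comp_curve_through_tendsto:
  assumes "C1_map M g" "z \<in> M" and curves: "\<And>n. curve_through M (x n) (\<gamma> n)" "curve_through M z \<gamma>0"
    and "x \<longlonglongrightarrow> z" "(\<lambda>n. vector_derivative (\<gamma> n) (at 0)) \<longlonglongrightarrow> vector_derivative \<gamma>0 (at 0)"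
  shows "(\<lambda>n. vector_derivative (g \<circ> \<gamma> n) (at 0)) \<longlonglongrightarrow> vector_derivative (g \<circ> \<gamma>0) (at 0)"
proof -
  obtain W G G' where W: "open W" "z \<in> W"
      "\<forall>y\<in>W. (G has_derivative blinfun_apply (G' y)) (at y)" "continuous_on W G'"
      "\<forall>y\<in>M \<inter> W. G y = g y"
    by (rule C1_mapE[OF assms(1,2)])
  have in_W: "eventually (\<lambda>n. x n \<in> W) sequentially"
    using topological_tendstoD[OF assms(5) W(1,2)] .
  have "(\<lambda>n. G' (x n) (vector_derivative (\<gamma> n) (at 0))) \<longlonglongrightarrow> G' z (vector_derivative \<gamma>0 (at 0))"
    using blinfun.tendsto[OF continuous_on_tendsto_compose[OF W(4) assms(5) W(2) in_W] assms(6)] .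
  moreover from in_W have "eventually (\<lambda>n. G' (x n) (vector_derivative (\<gamma> n) (at 0))
      = vector_derivative (g \<circ> \<gamma> n) (at 0)) sequentially"
    by eventually_elim (rule vector_derivative_comp_curve_through[OF curves(1) W(1), symmetric],
      use W in auto)
  ultimately have "(\<lambda>n. vector_derivative (g \<circ> \<gamma> n) (at 0)) \<longlonglongrightarrow> G' z (vector_derivative \<gamma>0 (at 0))"
    by (rule Lim_transform_eventually)
  moreover have "vector_derivative (g \<circ> \<gamma>0) (at 0) = G' z (vector_derivative \<gamma>0 (at 0))"
    using vector_derivative_comp_curve_through[OF curves(2) W(1,2) W(3)[rule_format, OF W(2)] W(5)] .
  ultimately show ?thesis
    by simp
qed

lemma conorm_le_of_tendsto:
  assumes sub: "C1_submanifold d M" "d \<ge> 1" and "C1_map M g" "z \<in> M"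
    and "\<And>n. x n \<in> M" "x \<longlonglongrightarrow> z" "\<And>n. conorm M g (x n) < c"
  shows "conorm M g z \<le> c"
proof -
  have "\<forall>n. \<exists>\<gamma>. curve_through M (x n) \<gamma> \<and> norm (vector_derivative \<gamma> (at 0)) = 1 \<and>
      norm (vector_derivative (g \<circ> \<gamma>) (at 0)) < c"
  proof
    fix n
    show "\<exists>\<gamma>. curve_through M (x n) \<gamma> \<and> norm (vector_derivative \<gamma> (at 0)) = 1 \<and>
      norm (vector_derivative (g \<circ> \<gamma>) (at 0)) < c"
      using conorm_lessE[OF sub assms(5) assms(7)[of n]] by blast
  qed
  then obtain \<gamma> where \<gamma>: "\<And>n. curve_through M (x n) (\<gamma> n)"
      "\<And>n. norm (vector_derivative (\<gamma> n) (at 0)) = 1"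
      "\<And>n. norm (vector_derivative (g \<circ> \<gamma> n) (at 0)) < c"
    by (simp add: choice_iff) blast
  define v where "v n = vector_derivative (\<gamma> n) (at 0)" for n
  have "\<forall>n. v n \<in> sphere 0 1"
    using \<gamma>(2) by (simp add: v_def)
  then obtain l r where l: "l \<in> sphere 0 1" "strict_mono r" "(v \<circ> r) \<longlonglongrightarrow> l"
    using seq_compactE[OF compact_imp_seq_compact[OF compact_sphere]] by blast
  have xr: "(x \<circ> r) \<longlonglongrightarrow> z"
    using LIMSEQ_subseq_LIMSEQ[OF assms(6) l(2)] .
  obtain \<gamma>0 where \<gamma>0: "curve_through M z \<gamma>0" "vector_derivative \<gamma>0 (at 0) = l"
    by (rule curve_through_velocity_limit[OF sub(1) assms(4) _ xr])
       (use \<gamma>(1) l(3) in \<open>simp_all add: v_def comp_def\<close>)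
  have "(\<lambda>n. vector_derivative (g \<circ> (\<gamma> \<circ> r) n) (at 0)) \<longlonglongrightarrow> vector_derivative (g \<circ> \<gamma>0) (at 0)"
    by (rule vector_derivative_comp_curve_through_tendsto[OF assms(3,4) _ \<gamma>0(1) xr])
       (use \<gamma>(1) l(3) \<gamma>0(2) in \<open>simp_all add: v_def comp_def\<close>)
  then have "norm (vector_derivative (g \<circ> \<gamma>0) (at 0)) \<le> c"
    by (rule Lim_norm_ubound[rotated]) (simp_all add: \<gamma>(3) less_imp_le)
  moreover have "conorm M g z \<le> norm (vector_derivative (g \<circ> \<gamma>0) (at 0))"
    using conorm_le_velocity[OF \<gamma>0(1)] \<gamma>0(2) l(1) by simp
  ultimately show ?thesis
    by linarith
qed

lemma conorm_lower_semicontinuous: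
  assumes "C1_submanifold d M" "d \<ge> 1" "C1_map M g" "z \<in> M" "c < conorm M g z"
  shows "\<exists>r>0. \<forall>x\<in>M \<inter> ball z r. c < conorm M g x"
proof (rule ccontr)
  assume neg: "\<not> ?thesis"
  then have near: "\<forall>r>0. \<exists>x\<in>M \<inter> ball z r. conorm M g x \<le> c"
    using not_less by blast
  have "\<forall>n. \<exists>x. x \<in> M \<and> dist z x < 1 / real (Suc n) \<and> conorm M g x \<le> c"
  proof
    fix n
    have pos: "1 / real (Suc n) > 0"
      by simp
    show "\<exists>x. x \<in> M \<and> dist z x < 1 / real (Suc n) \<and> conorm M g x \<le> c"
      using near[rule_format, OF pos] by auto
  qed
  then obtain x where x: "\<And>n. x n \<in> M" "\<And>n. dist z (x n) < 1 / real (Suc n)"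
      "\<And>n. conorm M g (x n) \<le> c"
    by (simp add: choice_iff) blast
  have "(\<lambda>n. x n - z) \<longlonglongrightarrow> 0"
    by (rule LIMSEQ_norm_0) (metis x(2) dist_norm norm_minus_commute)
  then have "x \<longlonglongrightarrow> z"
    by (rule LIM_zero_cancel)
  moreover have "conorm M g (x n) < (c + conorm M g z) / 2" for n
    using x(3)[of n] assms(5) by (simp add: field_simps)
  ultimately have "conorm M g z \<le> (c + conorm M g z) / 2"
    by (rule conorm_le_of_tendsto[OF assms(1-4) x(1)])
  then show False
    using assms(5) by (simp add: field_simps)
qed

lemma expanding_locally_uniform:
  assumes "C1_submanifold d M" "d \<ge> 1" "semigroup_of_C1_diffeos M \<Gamma>" "expanding M \<Gamma>" "z \<in> M"
  shows "\<exists>g \<rho> \<kappa>. g \<in> \<Gamma> \<and> \<rho> > 0 \<and> \<kappa> > 1 \<and> (\<forall>x\<in>M \<inter> ball z \<rho>. \<kappa> < conorm M (inv_into M g) x)"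
proof -
  obtain g where g: "g \<in> \<Gamma>" "1 < conorm M (inv_into M g) z"
    using assms(4,5) unfolding expanding_def by blast
  then have "C1_map M (inv_into M g)"
    using assms(3) unfolding semigroup_of_C1_diffeos_def C1_diffeo_def by blast
  define \<kappa> where "\<kappa> = (1 + conorm M (inv_into M g) z) / 2"
  have "1 < \<kappa>" "\<kappa> < conorm M (inv_into M g) z"
    using g(2) by (auto simp: \<kappa>_def)
  with conorm_lower_semicontinuous[OF assms(1,2) \<open>C1_map M (inv_into M g)\<close> assms(5)] g(1)
  show ?thesis
    by blast
qed

lemma compact_finite_ball_cover:
  fixes M :: "'a::metric_space set"
  assumes "compact M" "\<And>z. z \<in> M \<Longrightarrow> \<rho> z > 0"
  obtains k :: nat and c where "\<forall>i<k. c i \<in> M" "M = (\<Union>i<k. M \<inter> ball (c i) (\<rho> (c i)))"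
proof -
  have cover: "M \<subseteq> (\<Union>z\<in>M. ball z (\<rho> z))"
    using assms(2) centre_in_ball by blast
  obtain D where D: "D \<subseteq> M" "finite D" "M \<subseteq> (\<Union>z\<in>D. ball z (\<rho> z))"
  proof (rule compactE_image[OF assms(1) _ cover])
    show "open (ball z (\<rho> z))" for z
      by simp
  qed
  obtain xs where xs: "set xs = D"
    using finite_list[OF D(2)] by blast
  show ?thesis
  proof (rule that)
    show "\<forall>i<length xs. xs ! i \<in> M"
      using xs D(1) nth_mem by blast
    show "M = (\<Union>i<length xs. M \<inter> ball (xs ! i) (\<rho> (xs ! i)))"
    proof
      show "M \<subseteq> (\<Union>i<length xs. M \<inter> ball (xs ! i) (\<rho> (xs ! i)))"
      proof
        fix y assume "y \<in> M"
        then obtain z where "z \<in> D" "y \<in> ball z (\<rho> z)"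
          using D(3) by blast
        moreover obtain i where "i < length xs" "xs ! i = z"
          using xs \<open>z \<in> D\<close> by (auto simp: in_set_conv_nth)
        ultimately show "y \<in> (\<Union>i<length xs. M \<inter> ball (xs ! i) (\<rho> (xs ! i)))"
          using \<open>y \<in> M\<close> by blast
      qed
    qed blast
  qed
qed

lemma finite_common_lower_bound:
  fixes \<kappa> :: "nat \<Rightarrow> real"
  assumes "\<forall>i<k. a < \<kappa> i"
  obtains \<kappa>0 where "a < \<kappa>0" "\<forall>i<k. \<kappa>0 \<le> \<kappa> i"
proof
  show "a < Min (insert (a + 1) (\<kappa> ` {..<k}))"
    using assms by (subst Min_gr_iff) auto
  show "\<forall>i<k. Min (insert (a + 1) (\<kappa> ` {..<k})) \<le> \<kappa> i"
    by (simp add: Min_le_iff)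
qed

lemma expanding_imp_uniform_ball_cover:
  assumes "compact M" "C1_submanifold d M" "d \<ge> 1" "semigroup_of_C1_diffeos M \<Gamma>" "expanding M \<Gamma>"
  shows "\<exists>(k::nat) h c r \<kappa>. \<kappa> > 1 \<and> (\<forall>i<k. h i \<in> \<Gamma> \<and> c i \<in> M \<and> r i > 0) \<and>
    M = (\<Union>i<k. M \<inter> ball (c i) (r i)) \<and>
    (\<forall>i<k. \<forall>x \<in> M \<inter> ball (c i) (r i). conorm M (inv_into M (h i)) x > \<kappa>)"
proof -
  have "\<forall>z\<in>M. \<exists>g \<rho> \<kappa>. g \<in> \<Gamma> \<and> \<rho> > 0 \<and> \<kappa> > 1 \<and>
      (\<forall>x\<in>M \<inter> ball z \<rho>. \<kappa> < conorm M (inv_into M g) x)"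
    using expanding_locally_uniform[OF assms(2-5)] by blast
  then obtain g \<rho> \<kappa> where local: "\<forall>z\<in>M. g z \<in> \<Gamma> \<and> \<rho> z > 0 \<and> \<kappa> z > 1 \<and>
      (\<forall>x\<in>M \<inter> ball z (\<rho> z). \<kappa> z < conorm M (inv_into M (g z)) x)"
    by metis
  then have "\<And>z. z \<in> M \<Longrightarrow> \<rho> z > 0"
    by blast
  then obtain k :: nat and c where c: "\<forall>i<k. c i \<in> M" "M = (\<Union>i<k. M \<inter> ball (c i) (\<rho> (c i)))"
    by (rule compact_finite_ball_cover[OF assms(1)])
  have "\<forall>i<k. 1 < \<kappa> (c i)"
    using local c(1) by blast
  then obtain \<kappa>0 where "1 < \<kappa>0" and \<kappa>0_le: "\<forall>i<k. \<kappa>0 \<le> \<kappa> (c i)"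
    by (rule finite_common_lower_bound)
  have "\<forall>i<k. \<forall>x\<in>M \<inter> ball (c i) (\<rho> (c i)). \<kappa>0 < conorm M (inv_into M (g (c i))) x"
  proof (intro allI impI ballI)
    fix i x assume "i < k" "x \<in> M \<inter> ball (c i) (\<rho> (c i))"
    then have "\<kappa> (c i) < conorm M (inv_into M (g (c i))) x"
      using local c(1) by blast
    then show "\<kappa>0 < conorm M (inv_into M (g (c i))) x"
      using \<kappa>0_le \<open>i < k\<close> by force
  qed
  moreover have "\<forall>i<k. g (c i) \<in> \<Gamma> \<and> c i \<in> M \<and> \<rho> (c i) > 0"
    using local c(1) by blast
  ultimately show ?thesis
    using \<open>1 < \<kappa>0\<close> c(2)
    by (intro exI[of _ k] exI[of _ "\<lambda>i. g (c i)"] exI[of _ c] exI[of _ "\<lambda>i. \<rho> (c i)"] exI[of _ \<kappa>0])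
       simp
qed

theorem lemma3p2:
  fixes M :: "'a::euclidean_space set" and \<Gamma> :: "('a \<Rightarrow> 'a) set" and d :: nat
  assumes "compact M" and "C1_submanifold d M" and "d \<ge> 1"
    and "semigroup_of_C1_diffeos M \<Gamma>"
  shows "expanding M \<Gamma> \<longleftrightarrow>
    (\<exists>(k::nat) (h::nat \<Rightarrow> 'a \<Rightarrow> 'a) (c::nat \<Rightarrow> 'a) (r::nat \<Rightarrow> real) (\<kappa>::real).
       \<kappa> > 1 \<and> (\<forall>i<k. h i \<in> \<Gamma> \<and> c i \<in> M \<and> r i > 0) \<and>
       M = (\<Union>i<k. M \<inter> ball (c i) (r i)) \<and>
       (\<forall>i<k. \<forall>x \<in> M \<inter> ball (c i) (r i). conorm M (inv_into M (h i)) x > \<kappa>))"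
    (is "_ \<longleftrightarrow> ?cover")
proof
  assume "expanding M \<Gamma>"
  then show ?cover
    by (rule expanding_imp_uniform_ball_cover[OF assms])
next
  assume ?cover
  then obtain k :: nat and h c r \<kappa> where "\<kappa> > 1" "\<forall>i<k. h i \<in> \<Gamma> \<and> c i \<in> M \<and> r i > 0"
    and cover: "M \<subseteq> (\<Union>i<k. M \<inter> ball (c i) (r i))"
    and expand: "\<forall>i<k. \<forall>x \<in> M \<inter> ball (c i) (r i). \<kappa> < conorm M (inv_into M (h i)) x"
    by (elim exE conjE equalityE) blast
  show "expanding M \<Gamma>"
    unfolding expanding_def
  proof
    fix z assume "z \<in> M"
    with cover obtain i where "i < k" "z \<in> M \<inter> ball (c i) (r i)"
      by blast
    then have "h i \<in> \<Gamma>" "\<kappa> < conorm M (inv_into M (h i)) z"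
      using expand \<open>\<forall>i<k. h i \<in> \<Gamma> \<and> c i \<in> M \<and> r i > 0\<close> by blast+
    then show "\<exists>g\<in>\<Gamma>. 1 < conorm M (inv_into M g) z"
      using \<open>\<kappa> > 1\<close> by force
  qed
qed

end
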